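(* Let $(\mathcal N,\mathcal E)$ be a connected undirected graph on $\mathcal N=\{1,\dots,n\}$ and $W$ a symmetric stochastic matrix with $w_{ij}=0$ for $i\ne j$, $(i,j)\notin\mathcal E$, $w_{ii}>1/2$ for all $i$, and $w_{ij}$ rational in $(0,1)$ for $(i,j)\in\mathcal E$. Let $\mathbb N(t)=(\mathcal N,\mathcal E(t))$, $\mathcal E(t)\subseteq\mathcal E$, be random undirected graphs with $\Pr[(i,j)\in\mathcal E(t)\mid\sigma(\mathbb N(1),\dots,\mathbb N(t-1))]\ge p$ for all $t$, all $(i,j)\in\mathcal E$, for a constant $p>0$; define $w_{ij}(t)=w_{ij}$ if $(i,j)\in\mathcal E(t)$, $0$ otherwise ($i\ne j$), and $w_{ii}(t)=1-\sum_{j\ne i}w_{ij}(t)$. For each $i$ let $x_i(1),x_i(2),\dots$ be i.i.d. samples of $X_i$ with $|X_i|\le K$, $\bar x_i=E[X_i]$, $z_i(t)=\frac1t\sum_{\tau\le t}x_i(\tau)$. Fix $\Delta>0$, let $\mathcal B=\{k\Delta+\Delta/2:k=0,1,\dots\}$, $\mathcal R(x)$ the multiple $k\Delta$ ($k=0,1,\dots$) nearest to $x$ with $\mathcal R(k\Delta+\Delta/2)=(k+1)\Delta$, $\tilde z_i(t)=\mathcal R(z_i(t))$, $\Delta\tilde z(t+1)=\tilde z(t+1)-\tilde z(t)$. Let $\mathcal Q$ be the element-wise truncation, ceiling, or rounding-to-integer quantizer and let $$y(t+1)=W(t)\mathcal Q(y(t))+y(t)-\mathcal Q(y(t))+\Delta\tilde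 z(t+1),\qquad t=1,2,\dots.$$ If $\bar x_i\notin\mathcal B$ for all $i$, then almost surely there is a finite set containing $y_i(t)$ for all $t\in\{1,2,\dots\}$ and all $i\in\mathcal N$. *)

theory Defs
  imports "HOL-Probability.Probability"
begin

definition undirected_graph :: "nat \<Rightarrow> (nat \<times> nat) set \<Rightarrow> bool" where
  "undirected_graph n E \<longleftrightarrow> E \<subseteq> {1..n} \<times> {1..n} \<and> (\<forall>i j. (i,j) \<in> E \<longrightarrow> (j,i) \<in> E)
     \<and> (\<forall>i. (i,i) \<notin> E)"

definition connected_graph :: "nat \<Rightarrow> (nat \<times> nat) set \<Rightarrow> bool" where
  "connected_graph n E \<longleftrightarrow> (\<forall>i\<in>{1..n}. \<forall>j\<in>{1..n}. (i,j) \<in> E\<^sup>*)"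

definition Wt :: "nat \<Rightarrow> (nat \<Rightarrow> nat \<Rightarrow> real) \<Rightarrow> (nat \<times> nat) set \<Rightarrow> nat \<Rightarrow> nat \<Rightarrow> real" where
  "Wt n W Et i j =
     (if i = j then 1 - (\<Sum>k\<in>{1..n} - {i}. (if (i,k) \<in> Et then W i k else 0))
      else if (i,j) \<in> Et then W i j else 0)"

text \<open>\<open>\<R>(x)\<close>: the multiple \<open>k\<Delta>\<close>, \<open>k = 0,1,\<dots>\<close>, nearest to \<open>x\<close>, ties
  \<open>k\<Delta>+\<Delta>/2\<close> resolved upwards to \<open>(k+1)\<Delta>\<close>.\<close>
definition Rnd :: "real \<Rightarrow> real \<Rightarrow> real" where
  "Rnd \<Delta> x = \<Delta> * of_int (max 0 \<lfloor>x / \<Delta> + 1/2\<rfloor>)"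

definition Bset :: "real \<Rightarrow> real set" where
  "Bset \<Delta> = {real k * \<Delta> + \<Delta> / 2 | k::nat. True}"

definition zavg :: "(nat \<Rightarrow> 'a \<Rightarrow> real) \<Rightarrow> nat \<Rightarrow> 'a \<Rightarrow> real" where
  "zavg xi t \<omega> = (1 / real t) * (\<Sum>\<tau>\<in>{1..t}. xi \<tau> \<omega>)"

end

theory Submission
  imports Defs
begin

text \<open>By Hoeffding's inequality and Borel--Cantelli, each running average \<open>z\<^sub>i(t)\<close> converges
  almost surely to its mean. That mean is not a breakpoint of the rounding map \<open>\<R>\<close>, so
  \<open>\<R>(z\<^sub>i(t))\<close> is eventually constant and from some time \<open>T\<close> on the increments
  \<open>\<Delta>z\<^sub>i(t+1)\<close> vanish. Afterwards the integer vector \<open>\<Q>(y(t))\<close> stays in the integer box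
  spanned by \<open>\<Q>(y(T))\<close>: each row of \<open>W(t)\<close> forms a convex combination, and adding the
  quantization error \<open>y - \<Q>(y)\<close> never makes \<open>\<Q>\<close> cross an integer bound. Hence
  \<open>|y\<^sub>i(t) - y\<^sub>i(T)|\<close> is bounded, and \<open>D (y\<^sub>i(t) - y\<^sub>i(T))\<close> is an integer for a common
  denominator \<open>D\<close> of the rational weights, so \<open>y\<^sub>i(t)\<close> ranges over a bounded piece of a
  lattice.\<close>

context prob_space
begin

lemma prob_zavg_deviation_le:
  fixes X :: "nat \<Rightarrow> 'a \<Rightarrow> real"
  assumes indep: "indep_vars (\<lambda>_. borel) X {1..}"
    and ident: "\<forall>\<tau>\<ge>1. distr M borel (X \<tau>) = distr M borel (X 1)"
    and rv: "X 1 \<in> borel_measurable M"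
    and bdd: "\<forall>\<tau>\<ge>1. \<forall>\<omega>\<in>space M. \<bar>X \<tau> \<omega>\<bar> \<le> K"
    and t: "t > 0" and \<epsilon>: "\<epsilon> \<ge> 0"
  shows "prob {\<omega>\<in>space M. \<epsilon> \<le> \<bar>zavg X t \<omega> - expectation (X 1)\<bar>}
           \<le> 2 * exp (- \<epsilon>\<^sup>2 / (2 * (\<bar>K\<bar> + 1)\<^sup>2)) ^ t"
proof -
  \<comment> \<open>Hoeffding's bound needs a nondegenerate range, hence \<open>|K| + 1\<close> rather than \<open>K\<close>.\<close>
  define c where "c = \<bar>K\<bar> + 1"
  have c: "c > 0" unfolding c_def by simp
  interpret Hoeffding_ineq_iid M "{1..t}" X "X 1" "-c" c "expectation (X 1)"
  proof unfold_locales
    show "indep_vars (\<lambda>_. borel) X {1..t}"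
      by (rule indep_vars_subset[OF indep]) auto
    show "distr M borel (X \<tau>) = distr M borel (X 1)" if "\<tau> \<in> {1..t}" for \<tau>
      using that by (intro ident[rule_format]) simp
    show "AE x in M. X 1 x \<in> {-c..c}"
      using bdd unfolding c_def by (intro AE_I2) force
  qed (use rv c in simp_all)
  have exponent: "- 2 * real (card {1..t}) * \<epsilon>\<^sup>2 / (c - - c)\<^sup>2 = real t * (- \<epsilon>\<^sup>2 / (2 * c\<^sup>2))"
  proof -
    have "(c - - c)\<^sup>2 = 4 * c\<^sup>2" by (simp add: power2_eq_square)
    then show ?thesis using c by (simp add: field_simps)
  qed
  have "prob {\<omega>\<in>space M. \<epsilon> \<le> \<bar>zavg X t \<omega> - expectation (X 1)\<bar>}
      = prob {\<omega>\<in>space M. \<bar>(\<Sum>\<tau>\<in>{1..t}. X \<tau> \<omega>) / real (card {1..t}) - expectation (X 1)\<bar> \<ge> \<epsilon>}"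
    by (simp add: zavg_def)
  also have "\<dots> \<le> 2 * exp (- 2 * real (card {1..t}) * \<epsilon>\<^sup>2 / (c - - c)\<^sup>2)"
    by (rule Hoeffding_ineq_abs_ge') (use \<epsilon> c t in auto)
  also have "\<dots> = 2 * exp (- \<epsilon>\<^sup>2 / (2 * c\<^sup>2)) ^ t"
    unfolding exponent exp_of_nat_mult ..
  finally show ?thesis unfolding c_def .
qed

lemma AE_eventually_zavg_near_expectation:
  fixes X :: "nat \<Rightarrow> 'a \<Rightarrow> real"
  assumes rv: "\<forall>\<tau>\<ge>1. X \<tau> \<in> borel_measurable M"
    and indep: "indep_vars (\<lambda>_. borel) X {1..}"
    and ident: "\<forall>\<tau>\<ge>1. distr M borel (X \<tau>) = distr M borel (X 1)"
    and bdd: "\<forall>\<tau>\<ge>1. \<forall>\<omega>\<in>space M. \<bar>X \<tau> \<omega>\<bar> \<le> K"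
    and \<epsilon>: "\<epsilon> > 0"
  shows "AE \<omega> in M. eventually (\<lambda>t. \<bar>zavg X t \<omega> - expectation (X 1)\<bar> < \<epsilon>) sequentially"
proof -
  define A where "A t = {\<omega>\<in>space M. \<epsilon> \<le> \<bar>zavg X (Suc t) \<omega> - expectation (X 1)\<bar>}" for t
  define r where "r = exp (- \<epsilon>\<^sup>2 / (2 * (\<bar>K\<bar> + 1)\<^sup>2))"
  have "r < 1" unfolding r_def using \<epsilon> by simp
  have A_le: "prob (A t) \<le> 2 * r ^ Suc t" for t
    unfolding A_def r_def
    by (rule prob_zavg_deviation_le[OF indep ident]) (use rv bdd \<epsilon> in auto)
  have "summable (\<lambda>t. prob (A t))"
  proof (rule summable_comparison_test)
    show "\<exists>N. \<forall>t\<ge>N. norm (prob (A t)) \<le> 2 * r ^ Suc t" using A_le by auto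
    show "summable (\<lambda>t. 2 * r ^ Suc t)"
      using \<open>r < 1\<close> by (intro summable_mult summable_Suc_iff[THEN iffD2] summable_geometric)
        (simp add: r_def)
  qed
  moreover have "A t \<in> events" for t
  proof -
    have "(\<lambda>\<omega>. zavg X (Suc t) \<omega>) \<in> borel_measurable M"
      unfolding zavg_def using rv by (intro borel_measurable_sum borel_measurable_times) auto
    then show ?thesis unfolding A_def by measurable
  qed
  ultimately have "AE \<omega> in M. eventually (\<lambda>t. \<omega> \<in> space M - A t) sequentially"
    by (intro borel_cantelli_AE1) (auto simp: less_top[symmetric])
  then show ?thesis
  proof (rule eventually_mono)
    fix \<omega> assume "eventually (\<lambda>t. \<omega> \<in> space M - A t) sequentially"
    then have "eventually (\<lambda>t. \<bar>zavg X (Suc t) \<omega> - expectation (X 1)\<bar> < \<epsilon>) sequentially"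
      by (rule eventually_mono) (auto simp: A_def)
    then show "eventually (\<lambda>t. \<bar>zavg X t \<omega> - expectation (X 1)\<bar> < \<epsilon>) sequentially"
      by (rule eventually_sequentially_Suc[THEN iffD1])
  qed
qed

lemma AE_zavg_tendsto_expectation:
  fixes X :: "nat \<Rightarrow> 'a \<Rightarrow> real"
  assumes rv: "\<forall>\<tau>\<ge>1. X \<tau> \<in> borel_measurable M"
    and indep: "indep_vars (\<lambda>_. borel) X {1..}"
    and ident: "\<forall>\<tau>\<ge>1. distr M borel (X \<tau>) = distr M borel (X 1)"
    and bdd: "\<forall>\<tau>\<ge>1. \<forall>\<omega>\<in>space M. \<bar>X \<tau> \<omega>\<bar> \<le> K"
  shows "AE \<omega> in M. (\<lambda>t. zavg X t \<omega>) \<longlonglongrightarrow> expectation (X 1)"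
proof -
  have "AE \<omega> in M. \<forall>k::nat.
      eventually (\<lambda>t. \<bar>zavg X t \<omega> - expectation (X 1)\<bar> < inverse (Suc k)) sequentially"
    unfolding AE_all_countable
    by (intro allI AE_eventually_zavg_near_expectation[OF rv indep ident bdd]) simp
  then show ?thesis
  proof (rule eventually_mono)
    fix \<omega>
    assume near: "\<forall>k::nat. eventually (\<lambda>t. \<bar>zavg X t \<omega> - expectation (X 1)\<bar> < inverse (Suc k)) sequentially"
    show "(\<lambda>t. zavg X t \<omega>) \<longlonglongrightarrow> expectation (X 1)"
    proof (rule tendstoI)
      fix e :: real assume "e > 0"
      then obtain k where k: "inverse (Suc k) < e" using reals_Archimedean by blast
      show "eventually (\<lambda>t. dist (zavg X t \<omega>) (expectation (X 1)) < e) sequentially"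
        using near[rule_format, of k]
      proof (rule eventually_mono)
        fix t assume "\<bar>zavg X t \<omega> - expectation (X 1)\<bar> < inverse (Suc k)"
        with k show "dist (zavg X t \<omega>) (expectation (X 1)) < e" unfolding dist_real_def by linarith
      qed
    qed
  qed
qed

end

lemma Rnd_neg_eq_0:
  assumes "\<Delta> > 0" "x < 0"
  shows "Rnd \<Delta> x = 0"
proof -
  have "x / \<Delta> < 0" using assms by (simp add: divide_neg_pos)
  then have "\<lfloor>x / \<Delta> + 1/2\<rfloor> \<le> 0" by linarith
  then show ?thesis unfolding Rnd_def by simp
qed

lemma eventually_Rnd_eq:
  fixes f :: "'b \<Rightarrow> real"
  assumes f: "(f \<longlongrightarrow> \<mu>) F" and \<Delta>: "\<Delta> > 0" and \<mu>: "\<mu> \<notin> Bset \<Delta>"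
  shows "eventually (\<lambda>x. Rnd \<Delta> (f x) = Rnd \<Delta> \<mu>) F"
proof (cases "\<mu> < 0")
  case True
  \<comment> \<open>Below zero the clamping at \<open>0\<close> hides the breakpoints of the floor, which is why
    \<open>Bset \<Delta>\<close> contains only the nonnegative ones.\<close>
  have "eventually (\<lambda>x. f x < 0) F" using f True by (rule order_tendstoD(2))
  then show ?thesis by (rule eventually_mono) (use True \<Delta> Rnd_neg_eq_0 in auto)
next
  case False
  have "\<mu> / \<Delta> + 1/2 \<notin> \<int>"
  proof
    assume "\<mu> / \<Delta> + 1/2 \<in> \<int>"
    then obtain k where k: "\<mu> / \<Delta> + 1/2 = of_int k" by (auto elim: Ints_cases)
    moreover have "\<mu> / \<Delta> \<ge> 0" using False \<Delta> by simp
    ultimately have "(0::real) < of_int k" by linarith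
    then have "k \<ge> 1" by simp
    with k \<Delta> have "\<mu> = real (nat (k - 1)) * \<Delta> + \<Delta> / 2" by (simp add: field_simps)
    with \<mu> show False unfolding Bset_def by blast
  qed
  moreover have "((\<lambda>x. f x / \<Delta> + 1/2) \<longlongrightarrow> \<mu> / \<Delta> + 1/2) F"
    using f \<Delta> by (intro tendsto_intros) auto
  ultimately have "eventually (\<lambda>x. \<lfloor>f x / \<Delta> + 1/2\<rfloor> = \<lfloor>\<mu> / \<Delta> + 1/2\<rfloor>) F"
    by (intro eventually_floor_eq)
  then show ?thesis by (rule eventually_mono) (simp add: Rnd_def)
qed

lemma eventually_Rnd_Suc_eq:
  assumes "f \<longlonglongrightarrow> \<mu>" "\<Delta> > 0" "\<mu> \<notin> Bset \<Delta>"
  shows "eventually (\<lambda>t. Rnd \<Delta> (f (Suc t)) = Rnd \<Delta> (f t)) sequentially"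
proof -
  have ev: "eventually (\<lambda>t. Rnd \<Delta> (f t) = Rnd \<Delta> \<mu>) sequentially"
    by (rule eventually_Rnd_eq[OF assms])
  show ?thesis
    using ev eventually_sequentially_Suc[THEN iffD2, OF ev] by eventually_elim simp
qed

definition integer_quantizer :: "(real \<Rightarrow> real) \<Rightarrow> bool" where
  "integer_quantizer Q \<longleftrightarrow>
     Q = (\<lambda>x. of_int \<lfloor>x\<rfloor>) \<or> Q = (\<lambda>x. of_int \<lceil>x\<rceil>) \<or> Q = (\<lambda>x. of_int (round x))"

lemma integer_quantizer_Ints: "integer_quantizer Q \<Longrightarrow> Q x \<in> \<int>"
  unfolding integer_quantizer_def by auto

lemma integer_quantizer_error: "integer_quantizer Q \<Longrightarrow> \<bar>x - Q x\<bar> \<le> 1"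
  unfolding integer_quantizer_def by (auto simp: round_def) linarith+

text \<open>The error \<open>y - Q y\<close> lies in the half-open unit window \<open>e\<close> with \<open>Q (k + e) = k\<close> for
  integers \<open>k\<close> (\<open>[0,1)\<close>, \<open>(-1,0]\<close> or \<open>[-1/2,1/2)\<close>), so adding it to \<open>c \<in> [a, b]\<close> cannot
  push \<open>Q\<close> out of \<open>[a, b]\<close>.\<close>

lemma integer_quantizer_carry:
  fixes a b :: int
  assumes Q: "integer_quantizer Q" and "of_int a \<le> c" "c \<le> of_int b"
  shows "of_int a \<le> Q (c + (y - Q y)) \<and> Q (c + (y - Q y)) \<le> of_int b"
  using Q assms(2,3) unfolding integer_quantizer_def round_def
  by (elim disjE) (simp_all add: le_floor_iff floor_le_iff le_ceiling_iff ceiling_le_iff; linarith)+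

lemma Rats_common_denominator:
  fixes F :: "real set"
  assumes "finite F" "F \<subseteq> \<rat>"
  obtains D :: nat where "D > 0" "\<forall>q\<in>F. real D * q \<in> \<int>"
proof -
  have "\<exists>d::nat. d > 0 \<and> real d * q \<in> \<int>" if "q \<in> F" for q
  proof -
    from that assms(2) have "q \<in> \<rat>" by blast
    then obtain a b where "b > 0" "q = of_int a / of_int b" by (rule Rats_cases')
    then show ?thesis by (intro exI[of _ "nat b"]) simp
  qed
  then obtain d :: "real \<Rightarrow> nat" where d: "\<And>q. q \<in> F \<Longrightarrow> d q > 0 \<and> real (d q) * q \<in> \<int>"
    by metis
  show ?thesis
  proof (rule that[of "\<Prod>q\<in>F. d q"])
    show "(\<Prod>q\<in>F. d q) > 0" using d assms(1) by (simp add: prod_pos)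
    show "\<forall>q\<in>F. real (\<Prod>q\<in>F. d q) * q \<in> \<int>"
    proof
      fix q assume "q \<in> F"
      then have "real (\<Prod>q\<in>F. d q) * q = real (\<Prod>r\<in>F - {q}. d r) * (real (d q) * q)"
        using assms(1) by (simp add: prod.remove)
      also have "\<dots> \<in> \<int>" by (rule Ints_mult[OF Ints_of_nat]) (use d[OF \<open>q \<in> F\<close>] in blast)
      finally show "real (\<Prod>q\<in>F. d q) * q \<in> \<int>" .
    qed
  qed
qed

lemma finite_bounded_lattice:
  assumes "D > 0"
  shows "finite {x::real. real D * (x - x\<^sub>0) \<in> \<int> \<and> \<bar>x - x\<^sub>0\<bar> \<le> R}"
proof (rule finite_subset)
  define N where "N = \<lceil>real D * R\<rceil>"
  show "{x. real D * (x - x\<^sub>0) \<in> \<int> \<and> \<bar>x - x\<^sub>0\<bar> \<le> R} \<subseteq> (\<lambda>k. x\<^sub>0 + of_int k / real D) ` {-N..N}"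
  proof
    fix x assume x: "x \<in> {x. real D * (x - x\<^sub>0) \<in> \<int> \<and> \<bar>x - x\<^sub>0\<bar> \<le> R}"
    then obtain k where k: "real D * (x - x\<^sub>0) = of_int k" by (auto elim: Ints_cases)
    have "\<bar>of_int k\<bar> \<le> real D * R"
      using x assms unfolding k[symmetric] by (simp add: abs_mult)
    then have "k \<in> {-N..N}" unfolding N_def by (simp add: abs_le_iff) linarith
    moreover have "x = x\<^sub>0 + of_int k / real D" using k assms by (simp add: field_simps)
    ultimately show "x \<in> (\<lambda>k. x\<^sub>0 + of_int k / real D) ` {-N..N}" by blast
  qed
qed simp

lemma Wt_off_diag: "j \<noteq> i \<Longrightarrow> Wt n W Et i j = (if (i, j) \<in> Et then W i j else 0)"
  unfolding Wt_def by simp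

lemma sum_Wt:
  assumes "i \<in> {1..n}"
  shows "(\<Sum>j\<in>{1..n}. Wt n W Et i j) = 1"
proof -
  have "(\<Sum>j\<in>{1..n}. Wt n W Et i j) = Wt n W Et i i + (\<Sum>j\<in>{1..n} - {i}. Wt n W Et i j)"
    using assms by (simp add: sum.remove)
  also have "(\<Sum>j\<in>{1..n} - {i}. Wt n W Et i j)
      = (\<Sum>k\<in>{1..n} - {i}. if (i, k) \<in> Et then W i k else 0)"
    by (rule sum.cong) (auto simp: Wt_off_diag)
  finally show ?thesis unfolding Wt_def by simp
qed

lemma Wt_nonneg:
  assumes W_nonneg: "\<forall>k\<in>{1..n}. W i k \<ge> 0" and W_sum: "(\<Sum>k\<in>{1..n}. W i k) = 1"
    and i: "i \<in> {1..n}" and j: "j \<in> {1..n}"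
  shows "Wt n W Et i j \<ge> 0"
proof (cases "j = i")
  case True
  have "(\<Sum>k\<in>{1..n} - {i}. if (i, k) \<in> Et then W i k else 0) \<le> (\<Sum>k\<in>{1..n} - {i}. W i k)"
    by (rule sum_mono) (use W_nonneg in auto)
  also have "\<dots> = 1 - W i i"
    using W_sum i by (simp add: sum.remove)
  also have "\<dots> \<le> 1" using W_nonneg i by simp
  finally show ?thesis using True unfolding Wt_def by simp
next
  case False
  then show ?thesis using W_nonneg j by (simp add: Wt_off_diag)
qed

lemma Wt_scaled_Ints:
  assumes "\<forall>(i, j)\<in>Et. real D * W i j \<in> \<int>"
  shows "real D * Wt n W Et i j \<in> \<int>"
proof -
  have Et_Ints: "real D * (if (i, k) \<in> Et then W i k else 0) \<in> \<int>" for k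
    using assms by auto
  show ?thesis
  proof (cases "j = i")
    case True
    have "real D * Wt n W Et i j
        = real D - (\<Sum>k\<in>{1..n} - {i}. real D * (if (i, k) \<in> Et then W i k else 0))"
      using True unfolding Wt_def by (simp add: right_diff_distrib sum_distrib_left)
    also have "\<dots> \<in> \<int>" using Et_Ints by (intro Ints_diff Ints_sum) auto
    finally show ?thesis .
  next
    case False
    then show ?thesis using Et_Ints by (simp add: Wt_off_diag)
  qed
qed

lemma convex_combination_bounds:
  fixes w f :: "'a \<Rightarrow> real"
  assumes "\<forall>j\<in>J. w j \<ge> 0" "(\<Sum>j\<in>J. w j) = 1" "\<forall>j\<in>J. a \<le> f j \<and> f j \<le> b"
  shows "a \<le> (\<Sum>j\<in>J. w j * f j) \<and> (\<Sum>j\<in>J. w j * f j) \<le> b"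
proof
  have "a = (\<Sum>j\<in>J. w j * a)" using assms(2) by (simp add: sum_distrib_right[symmetric])
  also have "\<dots> \<le> (\<Sum>j\<in>J. w j * f j)"
    by (rule sum_mono) (use assms(1,3) in \<open>auto intro: mult_left_mono\<close>)
  finally show "a \<le> (\<Sum>j\<in>J. w j * f j)" .
  have "(\<Sum>j\<in>J. w j * f j) \<le> (\<Sum>j\<in>J. w j * b)"
    by (rule sum_mono) (use assms(1,3) in \<open>auto intro: mult_left_mono\<close>)
  also have "\<dots> = b" using assms(2) by (simp add: sum_distrib_right[symmetric])
  finally show "(\<Sum>j\<in>J. w j * f j) \<le> b" .
qed

lemma quantized_averaging_bounds:
  fixes a b :: int and Y :: "nat \<Rightarrow> 'i \<Rightarrow> real"
  assumes Q: "integer_quantizer Q"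
    and rec: "\<forall>t\<ge>T. \<forall>i\<in>I. Y (Suc t) i = (\<Sum>j\<in>I. w t i j * Q (Y t j)) + Y t i - Q (Y t i)"
    and w_nonneg: "\<forall>t\<ge>T. \<forall>i\<in>I. \<forall>j\<in>I. w t i j \<ge> 0"
    and w_sum: "\<forall>t\<ge>T. \<forall>i\<in>I. (\<Sum>j\<in>I. w t i j) = 1"
    and init: "\<forall>j\<in>I. of_int a \<le> Q (Y T j) \<and> Q (Y T j) \<le> of_int b"
    and "t \<ge> T" "i \<in> I"
  shows "of_int a \<le> Q (Y t i) \<and> Q (Y t i) \<le> of_int b"
  using \<open>t \<ge> T\<close> \<open>i \<in> I\<close>
proof (induction t arbitrary: i rule: dec_induct)
  case base
  then show ?case using init by blast
next
  case (step s)
  define c where "c = (\<Sum>j\<in>I. w s i j * Q (Y s j))"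
  have "of_int a \<le> c \<and> c \<le> of_int b"
    unfolding c_def by (rule convex_combination_bounds) (use step w_nonneg w_sum in auto)
  moreover have "Y (Suc s) i = c + (Y s i - Q (Y s i))"
    using rec step.hyps step.prems unfolding c_def by simp
  ultimately show ?case using integer_quantizer_carry[OF Q, of a c b "Y s i"] by simp
qed

lemma quantized_averaging_lattice:
  fixes Y :: "nat \<Rightarrow> 'i \<Rightarrow> real"
  assumes Q: "integer_quantizer Q"
    and rec: "\<forall>t\<ge>T. \<forall>i\<in>I. Y (Suc t) i = (\<Sum>j\<in>I. w t i j * Q (Y t j)) + Y t i - Q (Y t i)"
    and w_Ints: "\<forall>t\<ge>T. \<forall>i\<in>I. \<forall>j\<in>I. real D * w t i j \<in> \<int>"
    and "t \<ge> T" "i \<in> I"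
  shows "real D * (Y t i - Y T i) \<in> \<int>"
  using \<open>t \<ge> T\<close> \<open>i \<in> I\<close>
proof (induction t arbitrary: i rule: dec_induct)
  case base
  then show ?case by simp
next
  case (step s)
  have Y_Suc: "Y (Suc s) i = (\<Sum>j\<in>I. w s i j * Q (Y s j)) + Y s i - Q (Y s i)"
    using rec step.hyps step.prems by simp
  have "real D * (Y (Suc s) i - Y T i) = real D * (Y s i - Y T i)
      + (\<Sum>j\<in>I. (real D * w s i j) * Q (Y s j)) - real D * Q (Y s i)"
    unfolding Y_Suc by (simp add: algebra_simps sum_distrib_left)
  also have "\<dots> \<in> \<int>"
  proof -
    have "real D * (Y s i - Y T i) \<in> \<int>" using step.IH step.prems by blast
    moreover have "(\<Sum>j\<in>I. (real D * w s i j) * Q (Y s j)) \<in> \<int>"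
      by (rule Ints_sum, rule Ints_mult) (use step w_Ints integer_quantizer_Ints[OF Q] in auto)
    moreover have "real D * Q (Y s i) \<in> \<int>"
      using integer_quantizer_Ints[OF Q] by (intro Ints_mult) auto
    ultimately show ?thesis by (intro Ints_diff Ints_add)
  qed
  finally show ?case .
qed

lemma finite_values_quantized_averaging:
  fixes Y :: "nat \<Rightarrow> 'i \<Rightarrow> real"
  assumes "finite I" and Q: "integer_quantizer Q"
    and rec: "\<forall>t\<ge>T. \<forall>i\<in>I. Y (Suc t) i = (\<Sum>j\<in>I. w t i j * Q (Y t j)) + Y t i - Q (Y t i)"
    and w_nonneg: "\<forall>t\<ge>T. \<forall>i\<in>I. \<forall>j\<in>I. w t i j \<ge> 0"
    and w_sum: "\<forall>t\<ge>T. \<forall>i\<in>I. (\<Sum>j\<in>I. w t i j) = 1"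
    and w_Ints: "\<forall>t\<ge>T. \<forall>i\<in>I. \<forall>j\<in>I. real D * w t i j \<in> \<int>"
    and "D > 0"
  shows "finite ((\<lambda>(t, i). Y t i) ` (UNIV \<times> I))"
proof -
  define b where "b = \<lceil>\<Sum>j\<in>I. \<bar>Q (Y T j)\<bar>\<rceil>"
  have Q_init: "of_int (-b) \<le> Q (Y T j) \<and> Q (Y T j) \<le> of_int b" if "j \<in> I" for j
  proof -
    have "\<bar>Q (Y T j)\<bar> \<le> (\<Sum>j\<in>I. \<bar>Q (Y T j)\<bar>)"
      by (rule member_le_sum) (use that \<open>finite I\<close> in auto)
    also have "\<dots> \<le> of_int b" unfolding b_def by (rule le_of_int_ceiling)
    finally show ?thesis by (auto simp: abs_le_iff)
  qed
  have Q_bounded: "of_int (-b) \<le> Q (Y t i) \<and> Q (Y t i) \<le> of_int b" if "t \<ge> T" "i \<in> I" for t i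
    using quantized_averaging_bounds[OF Q rec w_nonneg w_sum _ that] Q_init by blast
  define R where "R = 2 * real_of_int b + 2"
  define L where "L i = {x. real D * (x - Y T i) \<in> \<int> \<and> \<bar>x - Y T i\<bar> \<le> R}" for i
  have in_L: "Y t i \<in> L i" if "t \<ge> T" "i \<in> I" for t i
  proof -
    have "\<bar>Y t i - Y T i\<bar> \<le> R"
      using Q_bounded[OF that] Q_bounded[of T i] that integer_quantizer_error[OF Q, of "Y t i"]
        integer_quantizer_error[OF Q, of "Y T i"] unfolding R_def by auto
    moreover have "real D * (Y t i - Y T i) \<in> \<int>"
      by (rule quantized_averaging_lattice[OF Q rec w_Ints that])
    ultimately show ?thesis unfolding L_def by blast
  qed
  have "Y t i \<in> (\<lambda>(t, i). Y t i) ` ({..<T} \<times> I) \<union> (\<Union>i\<in>I. L i)" if "i \<in> I" for t i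
  proof (cases "t < T")
    case True
    then show ?thesis using that by force
  next
    case False
    then show ?thesis using in_L[of t i] that by auto
  qed
  then have "(\<lambda>(t, i). Y t i) ` (UNIV \<times> I) \<subseteq> (\<lambda>(t, i). Y t i) ` ({..<T} \<times> I) \<union> (\<Union>i\<in>I. L i)"
    by auto
  then show ?thesis
    by (rule finite_subset) (use finite_bounded_lattice[OF \<open>D > 0\<close>] \<open>finite I\<close> in \<open>auto simp: L_def\<close>)
qed

lemma finite_values_quantized_consensus:
  fixes Y :: "nat \<Rightarrow> nat \<Rightarrow> real" and Et :: "nat \<Rightarrow> (nat \<times> nat) set"
  assumes Q: "integer_quantizer Q"
    and W_nonneg: "\<forall>i\<in>{1..n}. \<forall>j\<in>{1..n}. W i j \<ge> 0"
    and W_stoch: "\<forall>i\<in>{1..n}. (\<Sum>j\<in>{1..n}. W i j) = 1"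
    and "finite E" and W_Rats: "\<forall>(i, j)\<in>E. W i j \<in> \<rat>"
    and Et: "\<forall>t\<ge>T. Et t \<subseteq> E"
    and rec: "\<forall>t\<ge>T. \<forall>i\<in>{1..n}.
      Y (Suc t) i = (\<Sum>j\<in>{1..n}. Wt n W (Et t) i j * Q (Y t j)) + Y t i - Q (Y t i)"
  shows "finite ((\<lambda>(t, i). Y t i) ` (UNIV \<times> {1..n}))"
proof -
  obtain D :: nat where "D > 0" and "\<forall>q\<in>(\<lambda>(i, j). W i j) ` E. real D * q \<in> \<int>"
    by (rule Rats_common_denominator[of "(\<lambda>(i, j). W i j) ` E"]) (use \<open>finite E\<close> W_Rats in auto)
  then have W_Ints: "\<forall>(i, j)\<in>E. real D * W i j \<in> \<int>" by auto
  show ?thesis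
  proof (rule finite_values_quantized_averaging[OF finite_atLeastAtMost Q rec _ _ _ \<open>D > 0\<close>])
    show "\<forall>t\<ge>T. \<forall>i\<in>{1..n}. \<forall>j\<in>{1..n}. Wt n W (Et t) i j \<ge> 0"
      using Wt_nonneg W_nonneg W_stoch by blast
    show "\<forall>t\<ge>T. \<forall>i\<in>{1..n}. (\<Sum>j\<in>{1..n}. Wt n W (Et t) i j) = 1"
      using sum_Wt by blast
    show "\<forall>t\<ge>T. \<forall>i\<in>{1..n}. \<forall>j\<in>{1..n}. real D * Wt n W (Et t) i j \<in> \<int>"
    proof (intro allI impI ballI)
      fix t i j assume "t \<ge> T"
      with Et W_Ints have "\<forall>(i, j)\<in>Et t. real D * W i j \<in> \<int>" by blast
      then show "real D * Wt n W (Et t) i j \<in> \<int>" by (rule Wt_scaled_Ints)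
    qed
  qed
qed

theorem lemma4:
  fixes M :: "'a measure"
    and n :: nat and E :: "(nat \<times> nat) set" and W :: "nat \<Rightarrow> nat \<Rightarrow> real"
    and Ed :: "nat \<Rightarrow> 'a \<Rightarrow> (nat \<times> nat) set" and p :: real
    and xs :: "nat \<Rightarrow> nat \<Rightarrow> 'a \<Rightarrow> real" and K :: real and \<Delta> :: real
    and Q :: "real \<Rightarrow> real" and y :: "nat \<Rightarrow> 'a \<Rightarrow> nat \<Rightarrow> real"
  assumes prob: "prob_space M"
    and graph: "undirected_graph n E" and conn: "connected_graph n E"
    and W_sym: "\<forall>i\<in>{1..n}. \<forall>j\<in>{1..n}. W i j = W j i"
    and W_nonneg: "\<forall>i\<in>{1..n}. \<forall>j\<in>{1..n}. W i j \<ge> 0"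
    and W_stoch: "\<forall>i\<in>{1..n}. (\<Sum>j\<in>{1..n}. W i j) = 1"
    and W_zero: "\<forall>i\<in>{1..n}. \<forall>j\<in>{1..n}. i \<noteq> j \<and> (i,j) \<notin> E \<longrightarrow> W i j = 0"
    and W_diag: "\<forall>i\<in>{1..n}. W i i > 1/2"
    and W_edge: "\<forall>(i,j)\<in>E. W i j \<in> \<rat> \<and> 0 < W i j \<and> W i j < 1"
    and Ed_sub: "\<forall>t\<ge>1. \<forall>\<omega>\<in>space M. Ed t \<omega> \<subseteq> E \<and> undirected_graph n (Ed t \<omega>)"
    and Ed_meas: "\<forall>t\<ge>1. \<forall>S. {\<omega>\<in>space M. Ed t \<omega> = S} \<in> sets M"
    and p_pos: "p > 0"
    and Ed_prob: "\<forall>t\<ge>1. \<forall>(i,j)\<in>E.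
        \<forall>A\<in>sigma_sets (space M) {{\<omega>\<in>space M. Ed s \<omega> = S} | s S. 1 \<le> s \<and> s < t}.
          measure M (A \<inter> {\<omega>\<in>space M. (i,j) \<in> Ed t \<omega>}) \<ge> p * measure M A"
    and xs_rv: "\<forall>i\<in>{1..n}. \<forall>\<tau>\<ge>1. xs i \<tau> \<in> borel_measurable M"
    and xs_indep: "\<forall>i\<in>{1..n}. prob_space.indep_vars M (\<lambda>_. borel) (xs i) {1..}"
    and xs_ident: "\<forall>i\<in>{1..n}. \<forall>\<tau>\<ge>1. distr M borel (xs i \<tau>) = distr M borel (xs i 1)"
    and xs_bdd: "\<forall>i\<in>{1..n}. \<forall>\<tau>\<ge>1. \<forall>\<omega>\<in>space M. \<bar>xs i \<tau> \<omega>\<bar> \<le> K"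
    and Delta_pos: "\<Delta> > 0"
    and Q_cases: "Q = (\<lambda>x. of_int \<lfloor>x\<rfloor>) \<or> Q = (\<lambda>x. of_int \<lceil>x\<rceil>) \<or> Q = (\<lambda>x. of_int (round x))"
    and y_rec: "\<forall>\<omega>\<in>space M. \<forall>t\<ge>1. \<forall>i\<in>{1..n}.
        y (t+1) \<omega> i = (\<Sum>j\<in>{1..n}. Wt n W (Ed t \<omega>) i j * Q (y t \<omega> j))
                        + y t \<omega> i - Q (y t \<omega> i)
                        + (Rnd \<Delta> (zavg (xs i) (t+1) \<omega>) - Rnd \<Delta> (zavg (xs i) t \<omega>))"
    and mean_notB: "\<forall>i\<in>{1..n}. prob_space.expectation M (xs i 1) \<notin> Bset \<Delta>"
  shows "AE \<omega> in M. \<exists>S::real set. finite S \<and> (\<forall>t\<ge>1. \<forall>i\<in>{1..n}. y t \<omega> i \<in> S)"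
proof -
  interpret prob_space M by (rule prob)
  have "finite E"
    using graph finite_subset[of E "{1..n} \<times> {1..n}"] unfolding undirected_graph_def by auto
  have W_Rats: "\<forall>(i, j)\<in>E. W i j \<in> \<rat>" using W_edge by auto
  have "AE \<omega> in M. (\<lambda>t. zavg (xs i) t \<omega>) \<longlonglongrightarrow> expectation (xs i 1)" if "i \<in> {1..n}" for i
    using xs_rv xs_indep xs_ident xs_bdd that by (intro AE_zavg_tendsto_expectation; blast)
  then have "AE \<omega> in M. \<forall>i\<in>{1..n}. (\<lambda>t. zavg (xs i) t \<omega>) \<longlonglongrightarrow> expectation (xs i 1)"
    by (rule AE_finite_allI[OF finite_atLeastAtMost])
  then show ?thesis
  proof (rule AE_mp, intro AE_I2 impI)
    fix \<omega> assume \<omega>: "\<omega> \<in> space M"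
      and lim: "\<forall>i\<in>{1..n}. (\<lambda>t. zavg (xs i) t \<omega>) \<longlonglongrightarrow> expectation (xs i 1)"
    have "eventually (\<lambda>t. 1 \<le> t \<and>
        (\<forall>i\<in>{1..n}. Rnd \<Delta> (zavg (xs i) (Suc t) \<omega>) = Rnd \<Delta> (zavg (xs i) t \<omega>))) sequentially"
      using lim mean_notB Delta_pos
      by (intro eventually_conj eventually_ge_at_top eventually_ball_finite ballI eventually_Rnd_Suc_eq) auto
    then obtain T where T: "\<forall>t\<ge>T. 1 \<le> t \<and>
        (\<forall>i\<in>{1..n}. Rnd \<Delta> (zavg (xs i) (Suc t) \<omega>) = Rnd \<Delta> (zavg (xs i) t \<omega>))"
      unfolding eventually_sequentially by blast
    have "finite ((\<lambda>(t, i). y t \<omega> i) ` (UNIV \<times> {1..n}))"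
    proof (rule finite_values_quantized_consensus[OF _ W_nonneg W_stoch \<open>finite E\<close> W_Rats])
      show "integer_quantizer Q" using Q_cases unfolding integer_quantizer_def .
      show "\<forall>t\<ge>T. Ed t \<omega> \<subseteq> E" using Ed_sub \<omega> T by auto
      show "\<forall>t\<ge>T. \<forall>i\<in>{1..n}. y (Suc t) \<omega> i
          = (\<Sum>j\<in>{1..n}. Wt n W (Ed t \<omega>) i j * Q (y t \<omega> j)) + y t \<omega> i - Q (y t \<omega> i)"
        using y_rec \<omega> T by simp
    qed
    moreover have "\<forall>t\<ge>1. \<forall>i\<in>{1..n}. y t \<omega> i \<in> (\<lambda>(t, i). y t \<omega> i) ` (UNIV \<times> {1..n})"
      by force
    ultimately show "\<exists>S::real set. finite S \<and> (\<forall>t\<ge>1. \<forall>i\<in>{1..n}. y t \<omega> i \<in> S)"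
      by blast
  qed
qed

end
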